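(* Let $K\neq0$ and let $(\mathcal M,\rho)$ be a metric space such that $\operatorname{diam}(\mathcal M)\le\pi/(2\sqrt K)$ when $K>0$, satisfying the one-sided four point $\operatorname{cosq}_K$ condition. Let $\mathcal L$ be a shortest joining $A$ to $B$ and let $(\mathcal L_n)_{n\ge1}$ be shortests joining $A_n$ to $B_n$, with $A_n\to A$ and $B_n\to B$. Let $\mathfrak g_r$ be the reduced parametrization of $\mathcal L$ relative to $A$ and $\mathfrak g_{r,n}$ that of $\mathcal L_n$ relative to $A_n$. Then $\mathfrak g_{r,n}\to\mathfrak g_r$ uniformly on $[0,1]$.
   Context: A shortest joining $P$ to $Q$ is a rectifiable curve from $P$ to $Q$ of length $\rho(P,Q)$. If $\mathcal L$ is a shortest of length $l$ from $A$, its reduced parametrization relative to $A$ is $\mathfrak g_r:[0,1]\to\mathcal M$, $\mathfrak g_r(t)=$ the point of $\mathcal L$ such that the arc of $\mathcal L$ from $A$ to it has length $tl$. Let $\kappa=\sqrt{|K|}$. For $A\neq P$, $B\neq Q$ (with $\rho(A,P),\rho(B,Q),\rho(A,B)<\pi/\sqrt K$ if $K>0$) put $x=\rho(A,P)$, $y=\rho(B,Q)$, $a=\rho(A,B)$, $b=\rho(P,Q)$, $d=\rho(P,B)$, $f=\rho(A,Q)$; for $K>0$ $$\operatorname{cosq}_K(\overrightarrow{AP},\overrightarrow{BQ})=\frac{\cos\kappa b+\cos\kappa x\cos\kappa y}{\sin\kappa x\sin\kappa y}-\frac{(\cos\kappa x+\cos\kappa d)(\cos\kappa y+\cos\kappa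 f)}{(1+\cos\kappa a)\sin\kappa x\sin\kappa y},$$ and for $K<0$ $$\operatorname{cosq}_K(\overrightarrow{AP},\overrightarrow{BQ})=\frac{(\cosh\kappa x+\cosh\kappa d)(\cosh\kappa y+\cosh\kappa f)}{(1+\cosh\kappa a)\sinh\kappa x\sinh\kappa y}-\frac{\cosh\kappa b+\cosh\kappa x\cosh\kappa y}{\sinh\kappa x\sinh\kappa y}.$$ Upper/lower four point $\operatorname{cosq}_K$ condition: $\operatorname{cosq}_K\le1$ / $\ge-1$ for all such quadruples; one-sided: at least one of the two holds. *)

theory Defs
  imports "HOL-Analysis.Analysis"
begin

definition partition_sums :: "(real \<Rightarrow> 'a::metric_space) \<Rightarrow> real \<Rightarrow> real \<Rightarrow> real set" where
  "partition_sums \<gamma> a b =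
     {(\<Sum>i<n. dist (\<gamma> (t i)) (\<gamma> (t (Suc i)))) | t n.
        t 0 = a \<and> t n = b \<and> (\<forall>i<n. t i \<le> t (Suc i))}"

definition curve_length :: "(real \<Rightarrow> 'a::metric_space) \<Rightarrow> real \<Rightarrow> real \<Rightarrow> real" where
  "curve_length \<gamma> a b = Sup (partition_sums \<gamma> a b)"

definition rectifiable_curve :: "(real \<Rightarrow> 'a::metric_space) \<Rightarrow> bool" where
  "rectifiable_curve \<gamma> \<longleftrightarrow> continuous_on {0..1} \<gamma> \<and> bdd_above (partition_sums \<gamma> 0 1)"

definition shortest :: "(real \<Rightarrow> 'a::metric_space) \<Rightarrow> 'a \<Rightarrow> 'a \<Rightarrow> bool" where
  "shortest \<gamma> P Q \<longleftrightarrow> rectifiable_curve \<gamma> \<and> \<gamma> 0 = P \<and> \<gamma> 1 = Q \<and> curve_length \<gamma> 0 1 = dist P Q"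

definition reduced_param :: "(real \<Rightarrow> 'a::metric_space) \<Rightarrow> real \<Rightarrow> 'a" where
  "reduced_param \<gamma> t = \<gamma> (SOME s. s \<in> {0..1} \<and> curve_length \<gamma> 0 s = t * curve_length \<gamma> 0 1)"

definition cosq :: "real \<Rightarrow> 'a::metric_space \<Rightarrow> 'a \<Rightarrow> 'a \<Rightarrow> 'a \<Rightarrow> real" where
  "cosq K A P B Q =
    (let k = sqrt \<bar>K\<bar>; x = dist A P; y = dist B Q; a = dist A B; b = dist P Q;
         d = dist P B; f = dist A Q in
     if K > 0 then
       (cos (k*b) + cos (k*x) * cos (k*y)) / (sin (k*x) * sin (k*y))
       - (cos (k*x) + cos (k*d)) * (cos (k*y) + cos (k*f)) / ((1 + cos (k*a)) * sin (k*x) * sin (k*y))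
     else
       (cosh (k*x) + cosh (k*d)) * (cosh (k*y) + cosh (k*f)) / ((1 + cosh (k*a)) * sinh (k*x) * sinh (k*y))
       - (cosh (k*b) + cosh (k*x) * cosh (k*y)) / (sinh (k*x) * sinh (k*y)))"

definition admissible_quad :: "real \<Rightarrow> 'a::metric_space \<Rightarrow> 'a \<Rightarrow> 'a \<Rightarrow> 'a \<Rightarrow> bool" where
  "admissible_quad K A P B Q \<longleftrightarrow> A \<noteq> P \<and> B \<noteq> Q \<and>
     (K > 0 \<longrightarrow> dist A P < pi / sqrt K \<and> dist B Q < pi / sqrt K \<and> dist A B < pi / sqrt K)"

definition upper_cosq_cond :: "real \<Rightarrow> 'a::metric_space itself \<Rightarrow> bool" where
  "upper_cosq_cond K _ \<longleftrightarrow> (\<forall>A P B Q :: 'a. admissible_quad K A P B Q \<longrightarrow> cosq K A P B Q \<le> 1)"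

definition lower_cosq_cond :: "real \<Rightarrow> 'a::metric_space itself \<Rightarrow> bool" where
  "lower_cosq_cond K _ \<longleftrightarrow> (\<forall>A P B Q :: 'a. admissible_quad K A P B Q \<longrightarrow> cosq K A P B Q \<ge> -1)"

definition one_sided_cosq_cond :: "real \<Rightarrow> 'a::metric_space itself \<Rightarrow> bool" where
  "one_sided_cosq_cond K T \<longleftrightarrow> upper_cosq_cond K T \<or> lower_cosq_cond K T"

end

theory Submission
  imports Defs
begin

text \<open>If the convergence were not uniform, there would be parameters \<open>t\<^sub>n\<close> such that,
  along a subsequence, \<open>t\<^sub>n \<rightarrow> \<tau>\<close> and \<open>\<rho>(M\<^sub>n, N\<^sub>n) \<rightarrow> \<delta> > 0\<close>, where
  \<open>M\<^sub>n = g(t\<^sub>n)\<close> and \<open>N\<^sub>n = g\<^sub>n(t\<^sub>n)\<close> are the reduced parametrizations at \<open>t\<^sub>n\<close>.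
  Since these points divide \<open>AB\<close> and \<open>A\<^sub>nB\<^sub>n\<close> in the ratio \<open>t\<^sub>n\<close>, all distances from
  \<open>M\<^sub>n, N\<^sub>n\<close> to \<open>A, B\<close> converge to \<open>x = \<tau>l\<close> resp. \<open>y = (1 - \<tau>)l\<close>, \<open>l = \<rho>(A,B)\<close>.
  Passing to the limit in \<open>cosq\<^sub>K(AM\<^sub>n, N\<^sub>nB) \<le> 1\<close>, resp. \<open>cosq\<^sub>K(M\<^sub>nA, N\<^sub>nB) \<ge> -1\<close>,
  yields an explicit trigonometric expression in \<open>x, y, \<delta>\<close> which is \<open>> 1\<close>, resp. \<open>< -1\<close>,
  as soon as \<open>\<delta> > 0\<close>; the diameter bound keeps all angles \<open>\<kappa>\<rho>\<close> in \<open>[0, \<pi>/2]\<close>.\<close>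

lemma partition_sums_extend:
  assumes "v \<in> partition_sums \<gamma> 0 s" "s \<le> 1"
  shows "v + dist (\<gamma> s) (\<gamma> 1) \<in> partition_sums \<gamma> 0 1"
proof -
  from assms(1) obtain t n where t: "v = (\<Sum>i<n. dist (\<gamma> (t i)) (\<gamma> (t (Suc i))))"
    "t 0 = 0" "t n = s" "\<forall>i<n. t i \<le> t (Suc i)"
    unfolding partition_sums_def by blast
  define t' where "t' i = (if i \<le> n then t i else 1)" for i
  have "(\<Sum>i<n. dist (\<gamma> (t' i)) (\<gamma> (t' (Suc i)))) = v"
    unfolding t(1) by (intro sum.cong) (auto simp: t'_def)
  then have "(\<Sum>i<Suc n. dist (\<gamma> (t' i)) (\<gamma> (t' (Suc i)))) = v + dist (\<gamma> s) (\<gamma> 1)"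
    by (simp add: t'_def t(3))
  moreover have "t' 0 = 0" "t' (Suc n) = 1" using t by (auto simp: t'_def)
  moreover have "\<forall>i<Suc n. t' i \<le> t' (Suc i)"
    using t assms(2) by (auto simp: t'_def less_Suc_eq)
  ultimately show ?thesis unfolding partition_sums_def mem_Collect_eq
    by (intro exI[of _ t'] exI[of _ "Suc n"]) simp
qed

lemma shortest_initial_arc:
  assumes sh: "shortest \<gamma> P Q" and s: "0 \<le> s" "s \<le> 1"
  shows "curve_length \<gamma> 0 s = dist P (\<gamma> s)" "dist P (\<gamma> s) + dist (\<gamma> s) Q = dist P Q"
proof -
  have bdd: "bdd_above (partition_sums \<gamma> 0 1)" and g0: "\<gamma> 0 = P" and g1: "\<gamma> 1 = Q"
    and len: "Sup (partition_sums \<gamma> 0 1) = dist P Q"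
    using sh unfolding shortest_def rectifiable_curve_def curve_length_def by auto
  have upper: "v \<le> dist P Q - dist (\<gamma> s) Q" if "v \<in> partition_sums \<gamma> 0 s" for v
    using cSup_upper[OF partition_sums_extend[OF that s(2)] bdd] len g1 by simp
  have chord: "dist P (\<gamma> s) \<in> partition_sums \<gamma> 0 s"
    unfolding partition_sums_def mem_Collect_eq
    by (rule exI[of _ "\<lambda>i. if i = 0 then 0 else s"], rule exI[of _ 1]) (use s g0 in auto)
  have "dist P (\<gamma> s) \<le> curve_length \<gamma> 0 s"
    unfolding curve_length_def using upper by (intro cSup_upper[OF chord] bdd_aboveI) auto
  moreover have "curve_length \<gamma> 0 s \<le> dist P Q - dist (\<gamma> s) Q"
    unfolding curve_length_def using chord upper by (intro cSup_least) auto
  moreover have "dist P Q \<le> dist P (\<gamma> s) + dist (\<gamma> s) Q" by (rule dist_triangle)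
  ultimately show "curve_length \<gamma> 0 s = dist P (\<gamma> s)" "dist P (\<gamma> s) + dist (\<gamma> s) Q = dist P Q"
    by linarith+
qed

definition fraction_point :: "real \<Rightarrow> 'a::metric_space \<Rightarrow> 'a \<Rightarrow> 'a \<Rightarrow> bool" where
  "fraction_point t A B M \<longleftrightarrow> dist A M = t * dist A B \<and> dist M B = (1 - t) * dist A B"

lemma shortest_reduced_param_fraction_point:
  assumes sh: "shortest \<gamma> P Q" and t: "t \<in> {0..1}"
  shows "fraction_point t P Q (reduced_param \<gamma> t)"
proof -
  have cont: "continuous_on {0..1} \<gamma>" and g0: "\<gamma> 0 = P" and g1: "\<gamma> 1 = Q"
    and len: "curve_length \<gamma> 0 1 = dist P Q"
    using sh unfolding shortest_def rectifiable_curve_def by auto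
  have "continuous_on {0..1} (\<lambda>s. dist P (\<gamma> s))"
    by (intro continuous_on_dist continuous_on_const cont)
  moreover have "dist P (\<gamma> 0) \<le> t * dist P Q" "t * dist P Q \<le> dist P (\<gamma> 1)"
    using g0 g1 t by (auto intro: mult_left_le_one_le)
  ultimately obtain s where "0 \<le> s" "s \<le> 1" "dist P (\<gamma> s) = t * dist P Q"
    using IVT'[of "\<lambda>s. dist P (\<gamma> s)" 0 "t * dist P Q" 1] by auto
  then have "\<exists>s. s \<in> {0..1} \<and> curve_length \<gamma> 0 s = t * curve_length \<gamma> 0 1"
    using shortest_initial_arc(1)[OF sh] len by auto
  then obtain s where s: "s \<in> {0..1}" and "reduced_param \<gamma> t = \<gamma> s"
    and "curve_length \<gamma> 0 s = t * curve_length \<gamma> 0 1"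
    unfolding reduced_param_def by (metis (mono_tags, lifting) someI_ex)
  with shortest_initial_arc[OF sh, of s] len show ?thesis
    unfolding fraction_point_def by (auto simp: algebra_simps)
qed

lemma tendsto_dist_perturb:
  assumes "(\<lambda>n. dist (xs n) (zs n)) \<longlonglongrightarrow> L" and "xs \<longlonglongrightarrow> x"
  shows "(\<lambda>n. dist x (zs n)) \<longlonglongrightarrow> L"
proof -
  have close: "\<bar>dist x (zs n) - dist (xs n) (zs n)\<bar> \<le> dist x (xs n)" for n
    using dist_triangle[of x "zs n" "xs n"] dist_triangle[of "xs n" "zs n" x]
    by (auto simp: dist_commute)
  have "(\<lambda>n. dist x (xs n)) \<longlonglongrightarrow> 0"
    using tendsto_dist[OF tendsto_const assms(2), of x] by simp
  then have "(\<lambda>n. dist x (zs n) - dist (xs n) (zs n)) \<longlonglongrightarrow> 0"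
    by (rule Lim_null_comparison[rotated]) (simp add: close)
  from tendsto_add[OF this assms(1)] show ?thesis by simp
qed

lemma fraction_points_dist_tendsto:
  assumes As: "As \<longlonglongrightarrow> A" and Bs: "Bs \<longlonglongrightarrow> B" and t: "t \<longlonglongrightarrow> \<tau>"
    and M: "\<And>n. fraction_point (t n) A B (M n)"
    and N: "\<And>n. fraction_point (t n) (As n) (Bs n) (N n)"
  shows "(\<lambda>n. dist A (M n)) \<longlonglongrightarrow> \<tau> * dist A B" "(\<lambda>n. dist (M n) B) \<longlonglongrightarrow> (1 - \<tau>) * dist A B"
    "(\<lambda>n. dist A (N n)) \<longlonglongrightarrow> \<tau> * dist A B" "(\<lambda>n. dist (N n) B) \<longlonglongrightarrow> (1 - \<tau>) * dist A B"
proof -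
  have l: "(\<lambda>n. dist (As n) (Bs n)) \<longlonglongrightarrow> dist A B" by (intro tendsto_dist As Bs)
  show "(\<lambda>n. dist A (M n)) \<longlonglongrightarrow> \<tau> * dist A B" "(\<lambda>n. dist (M n) B) \<longlonglongrightarrow> (1 - \<tau>) * dist A B"
    using M unfolding fraction_point_def by (auto intro!: tendsto_intros t)
  have "(\<lambda>n. dist (As n) (N n)) \<longlonglongrightarrow> \<tau> * dist A B"
    using N unfolding fraction_point_def by (auto intro!: tendsto_intros t l)
  then show "(\<lambda>n. dist A (N n)) \<longlonglongrightarrow> \<tau> * dist A B"
    using As by (rule tendsto_dist_perturb)
  have "(\<lambda>n. dist (Bs n) (N n)) \<longlonglongrightarrow> (1 - \<tau>) * dist A B"
    using N unfolding fraction_point_def by (auto intro!: tendsto_intros t l simp: dist_commute)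
  then have "(\<lambda>n. dist B (N n)) \<longlonglongrightarrow> (1 - \<tau>) * dist A B"
    using Bs by (rule tendsto_dist_perturb)
  then show "(\<lambda>n. dist (N n) B) \<longlonglongrightarrow> (1 - \<tau>) * dist A B"
    by (simp add: dist_commute)
qed

definition cosq_fun :: "real \<Rightarrow> real \<Rightarrow> real \<Rightarrow> real \<Rightarrow> real \<Rightarrow> real \<Rightarrow> real \<Rightarrow> real" where
  "cosq_fun K x y a b d f =
    (let k = sqrt \<bar>K\<bar> in
     if K > 0 then
       (cos (k * b) + cos (k * x) * cos (k * y)) / (sin (k * x) * sin (k * y))
       - (cos (k * x) + cos (k * d)) * (cos (k * y) + cos (k * f)) / ((1 + cos (k * a)) * sin (k * x) * sin (k * y))
     else
       (cosh (k * x) + cosh (k * d)) * (cosh (k * y) + cosh (k * f)) / ((1 + cosh (k * a)) * sinh (k * x) * sinh (k * y))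
       - (cosh (k * b) + cosh (k * x) * cosh (k * y)) / (sinh (k * x) * sinh (k * y)))"

lemma cosq_eq_cosq_fun:
  "cosq K A P B Q = cosq_fun K (dist A P) (dist B Q) (dist A B) (dist P Q) (dist P B) (dist A Q)"
  by (simp add: cosq_def cosq_fun_def Let_def)

lemma tendsto_cosq_fun:
  assumes "xs \<longlonglongrightarrow> x" "ys \<longlonglongrightarrow> y" "as \<longlonglongrightarrow> a" "bs \<longlonglongrightarrow> b" "ds \<longlonglongrightarrow> d" "fs \<longlonglongrightarrow> f"
    and K: "K \<noteq> 0" and pos: "0 < x" "0 < y" "0 \<le> a"
    and bound: "K > 0 \<Longrightarrow> sqrt K * x < pi \<and> sqrt K * y < pi \<and> sqrt K * a < pi"
  shows "(\<lambda>n. cosq_fun K (xs n) (ys n) (as n) (bs n) (ds n) (fs n)) \<longlonglongrightarrow> cosq_fun K x y a b d f"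
proof (cases "K > 0")
  case True
  have "sin (sqrt K * x) > 0" "sin (sqrt K * y) > 0"
    using bound[OF True] pos True by (auto intro!: sin_gt_zero)
  moreover have "cos pi < cos (sqrt K * a)"
    using bound[OF True] pos True by (intro cos_monotone_0_pi) auto
  ultimately show ?thesis unfolding cosq_fun_def Let_def using assms True
    by (simp only: if_True) (intro tendsto_intros; simp)
next
  case False
  have "sinh (sqrt \<bar>K\<bar> * x) > 0" "sinh (sqrt \<bar>K\<bar> * y) > 0" "1 + cosh (sqrt \<bar>K\<bar> * a) > 0"
    using pos K by (auto simp: add_pos_pos)
  then show ?thesis unfolding cosq_fun_def Let_def using assms False
    by (simp only: if_False) (intro tendsto_intros; simp)
qed

lemma upper_cosq_cond_limit:
  fixes As Ps Bs Qs :: "nat \<Rightarrow> 'a::metric_space"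
  assumes cond: "upper_cosq_cond K TYPE('a)"
    and adm: "\<forall>\<^sub>F n in sequentially. admissible_quad K (As n) (Ps n) (Bs n) (Qs n)"
    and lim: "(\<lambda>n. dist (As n) (Ps n)) \<longlonglongrightarrow> x" "(\<lambda>n. dist (Bs n) (Qs n)) \<longlonglongrightarrow> y"
      "(\<lambda>n. dist (As n) (Bs n)) \<longlonglongrightarrow> a" "(\<lambda>n. dist (Ps n) (Qs n)) \<longlonglongrightarrow> b"
      "(\<lambda>n. dist (Ps n) (Bs n)) \<longlonglongrightarrow> d" "(\<lambda>n. dist (As n) (Qs n)) \<longlonglongrightarrow> f"
    and "K \<noteq> 0" "0 < x" "0 < y"
    and "K > 0 \<Longrightarrow> sqrt K * x < pi \<and> sqrt K * y < pi \<and> sqrt K * a < pi"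
  shows "cosq_fun K x y a b d f \<le> 1"
proof (rule tendsto_upperbound)
  have "0 \<le> a" by (rule tendsto_lowerbound[OF lim(3)]) auto
  then show "(\<lambda>n. cosq (K::real) (As n) (Ps n) (Bs n) (Qs n)) \<longlonglongrightarrow> cosq_fun K x y a b d f"
    unfolding cosq_eq_cosq_fun using assms by (intro tendsto_cosq_fun lim) auto
  show "\<forall>\<^sub>F n in sequentially. cosq K (As n) (Ps n) (Bs n) (Qs n) \<le> 1"
    using adm cond unfolding upper_cosq_cond_def by (auto elim: eventually_mono)
qed simp

lemma lower_cosq_cond_limit:
  fixes As Ps Bs Qs :: "nat \<Rightarrow> 'a::metric_space"
  assumes cond: "lower_cosq_cond K TYPE('a)"
    and adm: "\<forall>\<^sub>F n in sequentially. admissible_quad K (As n) (Ps n) (Bs n) (Qs n)"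
    and lim: "(\<lambda>n. dist (As n) (Ps n)) \<longlonglongrightarrow> x" "(\<lambda>n. dist (Bs n) (Qs n)) \<longlonglongrightarrow> y"
      "(\<lambda>n. dist (As n) (Bs n)) \<longlonglongrightarrow> a" "(\<lambda>n. dist (Ps n) (Qs n)) \<longlonglongrightarrow> b"
      "(\<lambda>n. dist (Ps n) (Bs n)) \<longlonglongrightarrow> d" "(\<lambda>n. dist (As n) (Qs n)) \<longlonglongrightarrow> f"
    and "K \<noteq> 0" "0 < x" "0 < y"
    and "K > 0 \<Longrightarrow> sqrt K * x < pi \<and> sqrt K * y < pi \<and> sqrt K * a < pi"
  shows "cosq_fun K x y a b d f \<ge> -1"
proof (rule tendsto_lowerbound)
  have "0 \<le> a" by (rule tendsto_lowerbound[OF lim(3)]) auto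
  then show "(\<lambda>n. cosq (K::real) (As n) (Ps n) (Bs n) (Qs n)) \<longlonglongrightarrow> cosq_fun K x y a b d f"
    unfolding cosq_eq_cosq_fun using assms by (intro tendsto_cosq_fun lim) auto
  show "\<forall>\<^sub>F n in sequentially. cosq K (As n) (Ps n) (Bs n) (Qs n) \<ge> -1"
    using adm cond unfolding lower_cosq_cond_def by (auto elim: eventually_mono)
qed simp

lemma diff_divide_common_factor:
  fixes a b c s t :: real
  assumes "s \<noteq> 0" "t \<noteq> 0" "c \<noteq> 0"
  shows "a / (s * t) - b / (c * s * t) = (a * c - b) / (c * s * t)"
    "b / (c * s * t) - a / (s * t) = (b - a * c) / (c * s * t)"
  using assms by (simp_all add: field_simps)

lemma spherical_split_gt_one:
  fixes X Y D :: real
  assumes "0 < X" "0 < Y" "X + Y \<le> pi / 2" "0 < D" "D \<le> pi / 2"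
  shows "(cos Y + cos X * cos Y) / (sin X * sin Y)
        - (cos X + cos D) * (cos Y + cos (X + Y)) / ((1 + cos X) * sin X * sin Y) > 1"
proof -
  have sX: "sin X > 0" and sY: "sin Y > 0" and cX: "cos X > 0" and cY: "cos Y > 0"
    and cXY: "cos (X + Y) \<ge> 0"
    using assms by (auto intro!: sin_gt_zero cos_gt_zero cos_ge_zero)
  have cD: "cos D < 1" using assms cos_monotone_0_pi[of 0 D] by auto
  have denom: "(1 + cos X) * sin X * sin Y > 0" using sX sY cX by simp
  have "(cos Y + cos X * cos Y) * (1 + cos X) - (cos X + cos D) * (cos Y + cos (X + Y))
      = (1 + cos X) * sin X * sin Y + (1 - cos D) * (cos Y + cos (X + Y))"
    unfolding cos_add by (simp add: algebra_simps)
  moreover have "(1 - cos D) * (cos Y + cos (X + Y)) > 0" using cD cY cXY by simp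
  ultimately show ?thesis
    using sX sY cX denom by (simp add: diff_divide_common_factor less_divide_eq)
qed

lemma spherical_split_lt_minus_one:
  fixes X Y D :: real
  assumes "0 < X" "0 < Y" "X + Y \<le> pi / 2" "0 < D" "D \<le> pi / 2"
  shows "(cos (X + Y) + cos X * cos Y) / (sin X * sin Y)
        - (cos X + cos X) * (cos Y + cos Y) / ((1 + cos D) * sin X * sin Y) < -1"
proof -
  have sX: "sin X > 0" and sY: "sin Y > 0" and cX: "cos X > 0" and cY: "cos Y > 0"
    and cD0: "cos D \<ge> 0"
    using assms by (auto intro!: sin_gt_zero cos_gt_zero cos_ge_zero)
  have cD: "cos D < 1" using assms cos_monotone_0_pi[of 0 D] by auto
  have denom: "(1 + cos D) * sin X * sin Y > 0" using sX sY cD0 by (simp add: add_pos_nonneg)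
  have "(cos (X + Y) + cos X * cos Y) * (1 + cos D) - (cos X + cos X) * (cos Y + cos Y)
      = - ((1 + cos D) * sin X * sin Y) - 2 * cos X * cos Y * (1 - cos D)"
    unfolding cos_add by (simp add: algebra_simps)
  moreover have "2 * cos X * cos Y * (1 - cos D) > 0" using cD cX cY by simp
  ultimately show ?thesis
    using sX sY cD0 denom by (simp add: diff_divide_common_factor divide_less_eq)
qed

lemma hyperbolic_split_gt_one:
  fixes X Y D :: real
  assumes "0 < X" "0 < Y" "0 < D"
  shows "(cosh X + cosh D) * (cosh Y + cosh (X + Y)) / ((1 + cosh X) * sinh X * sinh Y)
        - (cosh Y + cosh X * cosh Y) / (sinh X * sinh Y) > 1"
proof -
  have sX: "sinh X > 0" and sY: "sinh Y > 0" using assms by simp_all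
  have cD: "cosh D > 1" using assms cosh_real_nonneg_less_iff[of 0 D] by simp
  have c1: "1 + cosh X > 0" using cosh_real_ge_1[of X] by linarith
  have denom: "(1 + cosh X) * sinh X * sinh Y > 0" using sX sY c1 by simp
  have "(cosh X + cosh D) * (cosh Y + cosh (X + Y)) - (cosh Y + cosh X * cosh Y) * (1 + cosh X)
      = (1 + cosh X) * sinh X * sinh Y + (cosh D - 1) * (cosh Y + cosh (X + Y))"
    unfolding cosh_add by (simp add: algebra_simps)
  moreover have "(cosh D - 1) * (cosh Y + cosh (X + Y)) > 0"
    using cD by (intro mult_pos_pos add_pos_pos) auto
  ultimately show ?thesis
    using sX sY c1 denom by (simp add: diff_divide_common_factor less_divide_eq)
qed

lemma hyperbolic_split_lt_minus_one:
  fixes X Y D :: real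
  assumes "0 < X" "0 < Y" "0 < D"
  shows "(cosh X + cosh X) * (cosh Y + cosh Y) / ((1 + cosh D) * sinh X * sinh Y)
        - (cosh (X + Y) + cosh X * cosh Y) / (sinh X * sinh Y) < -1"
proof -
  have sX: "sinh X > 0" and sY: "sinh Y > 0" using assms by simp_all
  have cD: "cosh D > 1" using assms cosh_real_nonneg_less_iff[of 0 D] by simp
  have denom: "(1 + cosh D) * sinh X * sinh Y > 0" using sX sY cD by simp
  have "(cosh X + cosh X) * (cosh Y + cosh Y) - (cosh (X + Y) + cosh X * cosh Y) * (1 + cosh D)
      = - ((1 + cosh D) * sinh X * sinh Y) - 2 * cosh X * cosh Y * (cosh D - 1)"
    unfolding cosh_add by (simp add: algebra_simps)
  moreover have "2 * cosh X * cosh Y * (cosh D - 1) > 0" using cD by simp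
  ultimately show ?thesis
    using sX sY cD denom by (simp add: diff_divide_common_factor divide_less_eq)
qed

lemma cosq_fun_split_gt_one:
  assumes K: "K \<noteq> 0" and pos: "0 < x" "0 < y" "0 < \<delta>"
    and bound: "K > 0 \<Longrightarrow> sqrt K * (x + y) \<le> pi / 2 \<and> sqrt K * \<delta> \<le> pi / 2"
  shows "cosq_fun K x y x y \<delta> (x + y) > 1"
proof -
  define k where "k = sqrt \<bar>K\<bar>"
  have k: "k > 0" using K by (simp add: k_def)
  have kxy: "k * (x + y) = k * x + k * y" by (simp add: distrib_left)
  show ?thesis
  proof (cases "K > 0")
    case True
    then have "k = sqrt K" by (simp add: k_def)
    with bound[OF True] have "k * x + k * y \<le> pi / 2" "k * \<delta> \<le> pi / 2"
      by (simp_all add: distrib_left)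
    with True show ?thesis
      using spherical_split_gt_one[of "k * x" "k * y" "k * \<delta>"] k pos
      unfolding cosq_fun_def Let_def k_def[symmetric] kxy by simp
  next
    case False
    then show ?thesis
      using hyperbolic_split_gt_one[of "k * x" "k * y" "k * \<delta>"] k pos
      unfolding cosq_fun_def Let_def k_def[symmetric] kxy by simp
  qed
qed

lemma cosq_fun_split_lt_minus_one:
  assumes K: "K \<noteq> 0" and pos: "0 < x" "0 < y" "0 < \<delta>"
    and bound: "K > 0 \<Longrightarrow> sqrt K * (x + y) \<le> pi / 2 \<and> sqrt K * \<delta> \<le> pi / 2"
  shows "cosq_fun K x y \<delta> (x + y) x y < -1"
proof -
  define k where "k = sqrt \<bar>K\<bar>"
  have k: "k > 0" using K by (simp add: k_def)
  have kxy: "k * (x + y) = k * x + k * y" by (simp add: distrib_left)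
  show ?thesis
  proof (cases "K > 0")
    case True
    then have "k = sqrt K" by (simp add: k_def)
    with bound[OF True] have "k * x + k * y \<le> pi / 2" "k * \<delta> \<le> pi / 2"
      by (simp_all add: distrib_left)
    with True show ?thesis
      using spherical_split_lt_minus_one[of "k * x" "k * y" "k * \<delta>"] k pos
      unfolding cosq_fun_def Let_def k_def[symmetric] kxy by simp
  next
    case False
    then show ?thesis
      using hyperbolic_split_lt_minus_one[of "k * x" "k * y" "k * \<delta>"] k pos
      unfolding cosq_fun_def Let_def k_def[symmetric] kxy by simp
  qed
qed

lemma admissible_quad_if_diam_bound:
  fixes A P B Q :: "'a::metric_space"
  assumes diam: "K > 0 \<Longrightarrow> \<forall>x y :: 'a. dist x y \<le> pi / (2 * sqrt K)" and "A \<noteq> P" "B \<noteq> Q"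
  shows "admissible_quad K A P B Q"
proof -
  have "dist u v < pi / sqrt K" if "K > 0" for u v :: 'a
  proof -
    have "dist u v \<le> pi / (2 * sqrt K)" using diam[OF that] by blast
    also have "\<dots> < pi / sqrt K" using that by (simp add: field_simps)
    finally show ?thesis .
  qed
  with assms(2,3) show ?thesis unfolding admissible_quad_def by blast
qed

lemma fraction_points_limit_pos:
  assumes As: "As \<longlonglongrightarrow> A" and Bs: "Bs \<longlonglongrightarrow> B" and t: "t \<longlonglongrightarrow> \<tau>"
    and M: "\<And>n. fraction_point (t n) A B (M n)"
    and N: "\<And>n. fraction_point (t n) (As n) (Bs n) (N n)"
    and MN: "(\<lambda>n. dist (M n) (N n)) \<longlonglongrightarrow> \<delta>" and \<delta>: "\<delta> > 0"
  shows "0 < \<tau> * dist A B" "0 < (1 - \<tau>) * dist A B"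
proof -
  note lim = fraction_points_dist_tendsto[OF As Bs t M N]
  have "\<delta> \<le> \<tau> * dist A B + \<tau> * dist A B"
    by (rule tendsto_le[OF _ tendsto_add[OF lim(1,3)] MN])
      (auto intro!: always_eventually dist_triangle3)
  moreover have "\<delta> \<le> (1 - \<tau>) * dist A B + (1 - \<tau>) * dist A B"
    by (rule tendsto_le[OF _ tendsto_add[OF lim(2,4)] MN])
      (auto intro!: always_eventually dist_triangle2)
  ultimately show "0 < \<tau> * dist A B" "0 < (1 - \<tau>) * dist A B" using \<delta> by linarith+
qed

lemma fraction_points_dist_limit_eq_0:
  fixes A B :: "'a::metric_space" and As Bs M N :: "nat \<Rightarrow> 'a"
  assumes K: "K \<noteq> 0"
    and diam: "K > 0 \<Longrightarrow> \<forall>x y :: 'a. dist x y \<le> pi / (2 * sqrt K)"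
    and cond: "one_sided_cosq_cond K TYPE('a)"
    and As: "As \<longlonglongrightarrow> A" and Bs: "Bs \<longlonglongrightarrow> B" and t: "t \<longlonglongrightarrow> \<tau>"
    and M: "\<And>n. fraction_point (t n) A B (M n)"
    and N: "\<And>n. fraction_point (t n) (As n) (Bs n) (N n)"
    and MN: "(\<lambda>n. dist (M n) (N n)) \<longlonglongrightarrow> \<delta>"
  shows "\<delta> = 0"
proof (rule ccontr)
  assume "\<delta> \<noteq> 0"
  moreover have "\<delta> \<ge> 0" by (rule tendsto_lowerbound[OF MN]) auto
  ultimately have \<delta>: "\<delta> > 0" by simp
  define x y where "x = \<tau> * dist A B" and "y = (1 - \<tau>) * dist A B"
  have xy: "dist A B = x + y" by (simp add: x_def y_def algebra_simps)
  note lim = fraction_points_dist_tendsto[OF As Bs t M N, folded x_def y_def]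
  have lim_commuted: "(\<lambda>n. dist (M n) A) \<longlonglongrightarrow> x" "(\<lambda>n. dist (N n) B) \<longlonglongrightarrow> y"
    using lim by (simp_all add: dist_commute)
  note x_y = fraction_points_limit_pos[OF As Bs t M N MN \<delta>, folded x_def y_def]
  have bound: "sqrt K * (x + y) \<le> pi / 2 \<and> sqrt K * \<delta> \<le> pi / 2" if "K > 0"
  proof -
    have "dist A B \<le> pi / (2 * sqrt K)" using diam[OF that] by blast
    moreover have "\<delta> \<le> pi / (2 * sqrt K)"
      using diam[OF that] by (intro tendsto_upperbound[OF MN]) auto
    ultimately show ?thesis using that by (simp add: xy field_simps)
  qed
  have angles: "sqrt K * x < pi \<and> sqrt K * y < pi \<and> sqrt K * \<delta> < pi" if "K > 0"
  proof -
    have "0 < sqrt K * x" "0 < sqrt K * y" using that x_y by simp_all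
    with bound[OF that] pi_gt_zero show ?thesis by (auto simp: distrib_left)
  qed
  have "\<forall>\<^sub>F n in sequentially. 0 < dist A (M n) \<and> 0 < dist (N n) B"
    using order_tendstoD(1)[OF lim(1) x_y(1)] order_tendstoD(1)[OF lim(4) x_y(2)]
    by eventually_elim simp
  then have adm: "\<forall>\<^sub>F n in sequentially.
      admissible_quad K A (M n) (N n) B \<and> admissible_quad K (M n) A (N n) B"
    by eventually_elim (auto intro: admissible_quad_if_diam_bound[OF diam])
  from cond show False
    unfolding one_sided_cosq_cond_def
  proof
    assume "upper_cosq_cond K TYPE('a)"
    then have "cosq_fun K x y x y \<delta> (x + y) \<le> 1"
      by (rule upper_cosq_cond_limit[where Ps = M and Bs = N])
        (use adm lim MN K x_y angles in \<open>auto simp: xy elim: eventually_mono\<close>)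
    with cosq_fun_split_gt_one[OF K x_y \<delta> bound] show False by simp
  next
    assume "lower_cosq_cond K TYPE('a)"
    then have "cosq_fun K x y \<delta> (x + y) x y \<ge> -1"
      by (rule lower_cosq_cond_limit[where As = M and Bs = N])
        (use adm lim lim_commuted MN K x_y angles in \<open>auto simp: xy elim: eventually_mono\<close>)
    with cosq_fun_split_lt_minus_one[OF K x_y \<delta> bound] show False by simp
  qed
qed

lemma fraction_points_dist_tendsto_0:
  fixes A B :: "'a::metric_space" and As Bs M N :: "nat \<Rightarrow> 'a"
  assumes K: "K \<noteq> 0"
    and diam: "K > 0 \<Longrightarrow> \<forall>x y :: 'a. dist x y \<le> pi / (2 * sqrt K)"
    and cond: "one_sided_cosq_cond K TYPE('a)"
    and As: "As \<longlonglongrightarrow> A" and Bs: "Bs \<longlonglongrightarrow> B" and t: "\<And>n. t n \<in> {0..1}"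
    and M: "\<And>n. fraction_point (t n) A B (M n)"
    and N: "\<And>n. fraction_point (t n) (As n) (Bs n) (N n)"
  shows "(\<lambda>n. dist (M n) (N n)) \<longlonglongrightarrow> 0"
proof (rule ccontr)
  define d where "d n = dist (M n) (N n)" for n
  assume "\<not> (\<lambda>n. dist (M n) (N n)) \<longlonglongrightarrow> 0"
  then obtain e where e: "e > 0" and "\<forall>m. \<exists>n\<ge>m. e \<le> d n"
    unfolding LIMSEQ_iff d_def by (auto simp: not_less)
  then have "infinite {n. e \<le> d n}" by (simp add: infinite_nat_iff_unbounded_le)
  then obtain r :: "nat \<Rightarrow> nat" where r: "strict_mono r" "\<And>n. e \<le> d (r n)"
    using infinite_enumerate by blast
  have "(\<lambda>n. dist A (As n) + dist (As n) (Bs n)) \<longlonglongrightarrow> dist A A + dist A B"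
    by (intro tendsto_intros As Bs)
  then have "Bseq (\<lambda>n. dist A (As n) + dist (As n) (Bs n))"
    by (rule convergent_imp_Bseq[OF convergentI])
  then obtain C where C: "\<And>n. dist A (As n) + dist (As n) (Bs n) \<le> C"
    unfolding Bseq_def by fastforce
  have d_le: "d n \<le> dist A B + C" for n
  proof -
    have "d n \<le> dist A (M n) + (dist A (As n) + dist (As n) (N n))"
      unfolding d_def by (meson add_left_mono dist_triangle dist_triangle3 order_trans)
    moreover have "dist A (M n) \<le> dist A B" "dist (As n) (N n) \<le> dist (As n) (Bs n)"
      using M[of n] N[of n] t[of n] unfolding fraction_point_def
      by (auto intro: mult_left_le_one_le)
    ultimately show ?thesis using C[of n] by linarith
  qed
  have "seq_compact ({0..1::real} \<times> {0..dist A B + C})"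
    by (intro compact_imp_seq_compact compact_Times compact_Icc)
  moreover have "\<forall>j. (t (r j), d (r j)) \<in> {0..1} \<times> {0..dist A B + C}"
    using t d_le by (auto simp: d_def)
  ultimately obtain lim s where s: "strict_mono (s :: nat \<Rightarrow> nat)"
    "((\<lambda>j. (t (r j), d (r j))) \<circ> s) \<longlonglongrightarrow> lim"
    by (rule seq_compactE) blast
  define q where "q = r \<circ> s"
  have q: "strict_mono q" unfolding q_def using r(1) s(1) by (rule strict_mono_o)
  have "snd lim = 0"
  proof (rule fraction_points_dist_limit_eq_0[OF K diam cond])
    show "(\<lambda>j. t (q j)) \<longlonglongrightarrow> fst lim" "(\<lambda>j. dist (M (q j)) (N (q j))) \<longlonglongrightarrow> snd lim"
      using tendsto_fst[OF s(2)] tendsto_snd[OF s(2)] by (simp_all add: q_def o_def d_def)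
    show "(\<lambda>j. As (q j)) \<longlonglongrightarrow> A" "(\<lambda>j. Bs (q j)) \<longlonglongrightarrow> B"
      using LIMSEQ_subseq_LIMSEQ[OF As q] LIMSEQ_subseq_LIMSEQ[OF Bs q] by (simp_all add: o_def)
  qed (use M N in auto)
  moreover have "e \<le> snd lim"
    using r(2) tendsto_snd[OF s(2)] by (intro tendsto_lowerbound) (auto simp: o_def)
  ultimately show False using e by simp
qed

lemma uniform_limit_sequentially_dist_tendsto_0I:
  fixes f :: "nat \<Rightarrow> 'a \<Rightarrow> 'b::metric_space"
  assumes "\<And>x. (\<And>n. x n \<in> S) \<Longrightarrow> (\<lambda>n. dist (f n (x n)) (g (x n))) \<longlonglongrightarrow> 0"
  shows "uniform_limit S f g sequentially"
  unfolding uniform_limit_iff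
proof (intro allI impI)
  fix e :: real assume e: "e > 0"
  show "\<forall>\<^sub>F n in sequentially. \<forall>x\<in>S. dist (f n x) (g x) < e"
  proof (cases "S = {}")
    case False
    text \<open>\<open>worst n\<close> is a point where \<open>f n\<close> is \<open>e\<close>-far from \<open>g\<close>, if there is one.\<close>
    define worst where "worst n =
      (SOME x. x \<in> S \<and> (dist (f n x) (g x) < e \<longrightarrow> (\<forall>y\<in>S. dist (f n y) (g y) < e)))" for n
    have worst: "worst n \<in> S \<and> (dist (f n (worst n)) (g (worst n)) < e \<longrightarrow> (\<forall>y\<in>S. dist (f n y) (g y) < e))"
      for n unfolding worst_def by (rule someI_ex) (use False in \<open>auto simp: not_less\<close>)
    have "(\<lambda>n. dist (f n (worst n)) (g (worst n))) \<longlonglongrightarrow> 0" using worst by (intro assms) blast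
    then have "\<forall>\<^sub>F n in sequentially. dist (f n (worst n)) (g (worst n)) < e"
      using e by (rule order_tendstoD)
    then show ?thesis by eventually_elim (use worst in blast)
  qed simp
qed

theorem lemma6p1:
  fixes K :: real
    and \<gamma> :: "real \<Rightarrow> 'a::metric_space" and A B :: 'a
    and \<gamma>s :: "nat \<Rightarrow> real \<Rightarrow> 'a" and As Bs :: "nat \<Rightarrow> 'a"
  assumes "K \<noteq> 0"
    and "K > 0 \<Longrightarrow> \<forall>x y :: 'a. dist x y \<le> pi / (2 * sqrt K)"
    and "one_sided_cosq_cond K TYPE('a)"
    and "shortest \<gamma> A B"
    and "\<And>n. shortest (\<gamma>s n) (As n) (Bs n)"
    and "As \<longlonglongrightarrow> A" and "Bs \<longlonglongrightarrow> B"
  shows "uniform_limit {0..1} (\<lambda>n. reduced_param (\<gamma>s n)) (reduced_param \<gamma>) sequentially"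
proof (rule uniform_limit_sequentially_dist_tendsto_0I)
  fix t :: "nat \<Rightarrow> real" assume t: "\<And>n. t n \<in> {0..1}"
  have "(\<lambda>n. dist (reduced_param \<gamma> (t n)) (reduced_param (\<gamma>s n) (t n))) \<longlonglongrightarrow> 0"
    by (rule fraction_points_dist_tendsto_0[OF assms(1-3,6,7) t
          shortest_reduced_param_fraction_point[OF assms(4) t]
          shortest_reduced_param_fraction_point[OF assms(5) t]])
  then show "(\<lambda>n. dist (reduced_param (\<gamma>s n) (t n)) (reduced_param \<gamma> (t n))) \<longlonglongrightarrow> 0"
    by (simp add: dist_commute)
qed

end
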